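(* Let $k$ be a field, $X,Y$ indeterminates, $M=Yk(X)[[Y]]$ and $R=k+M$. Then $R$ is integrally closed, but $R$ does not have the finite $t$-basic ideal property: for the finitely generated ideal $I=Y(k+kX+M)=(Y,XY)R$ and $J=YR\subseteq I$, one has $(JI)_t=(I^2)_t$ while $J_t=YR\ne M=I_t$.
   Context: For a domain $R$ with quotient field $K$ and nonzero fractional ideal $I$: $I^{-1}=(R:I)=\{x\in K:xI\subseteq R\}$, $I_v=(I^{-1})^{-1}$, $I_t=\bigcup J_v$ over finitely generated subideals $J\subseteq I$. For a nonzero ideal $I$, an ideal $J\subseteq I$ is a $t$-reduction of $I$ if $(JI^n)_t=(I^{n+1})_t$ for some integer $n\ge0$; $I$ is $t$-basic if every $t$-reduction $J$ of $I$ satisfies $J_t=I_t$. The finite $t$-basic ideal property means every nonzero finitely generated ideal is $t$-basic. *)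

theory Defs
  imports "HOL-Computational_Algebra.Computational_Algebra"
begin

definition gen :: "'a::field set \<Rightarrow> 'a set \<Rightarrow> 'a set" where
  "gen R S = {x. \<exists>F c. finite F \<and> F \<subseteq> S \<and> (\<forall>s\<in>F. c s \<in> R) \<and> x = (\<Sum>s\<in>F. c s * s)}"

definition is_subring :: "'a::field set \<Rightarrow> bool" where
  "is_subring R \<longleftrightarrow> 1 \<in> R \<and> (\<forall>x\<in>R. \<forall>y\<in>R. x + y \<in> R \<and> x - y \<in> R \<and> x * y \<in> R)"

text \<open>K (the whole type) is the quotient field of R.\<close>
definition is_quotient_field :: "'a::field set \<Rightarrow> bool" where
  "is_quotient_field R \<longleftrightarrow> (\<forall>x. \<exists>a\<in>R. \<exists>b\<in>R. b \<noteq> 0 \<and> x = a / b)"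

definition integrally_closed :: "'a::field set \<Rightarrow> bool" where
  "integrally_closed R \<longleftrightarrow>
     (\<forall>x. (\<exists>n c. (\<forall>i<n. c i \<in> R) \<and> x ^ n + (\<Sum>i<n. c i * x ^ i) = 0) \<longrightarrow> x \<in> R)"

definition is_submod :: "'a::field set \<Rightarrow> 'a set \<Rightarrow> bool" where
  "is_submod R I \<longleftrightarrow> 0 \<in> I \<and> (\<forall>x\<in>I. \<forall>y\<in>I. x + y \<in> I) \<and> (\<forall>r\<in>R. \<forall>x\<in>I. r * x \<in> I)"

definition is_ideal :: "'a::field set \<Rightarrow> 'a set \<Rightarrow> bool" where
  "is_ideal R I \<longleftrightarrow> is_submod R I \<and> I \<subseteq> R"

definition fin_gen :: "'a::field set \<Rightarrow> 'a set \<Rightarrow> bool" where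
  "fin_gen R I \<longleftrightarrow> (\<exists>S. finite S \<and> I = gen R S)"

definition iprod :: "'a::field set \<Rightarrow> 'a set \<Rightarrow> 'a set \<Rightarrow> 'a set" where
  "iprod R I J = gen R {a * b | a b. a \<in> I \<and> b \<in> J}"

primrec ipow :: "'a::field set \<Rightarrow> 'a set \<Rightarrow> nat \<Rightarrow> 'a set" where
  "ipow R I 0 = R"
| "ipow R I (Suc n) = iprod R I (ipow R I n)"

definition colon_inv :: "'a::field set \<Rightarrow> 'a set \<Rightarrow> 'a set" where
  "colon_inv R I = {x. \<forall>y\<in>I. x * y \<in> R}"

definition v_op :: "'a::field set \<Rightarrow> 'a set \<Rightarrow> 'a set" where
  "v_op R I = colon_inv R (colon_inv R I)"

definition t_op :: "'a::field set \<Rightarrow> 'a set \<Rightarrow> 'a set" where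
  "t_op R I = \<Union> {v_op R J | J. J \<subseteq> I \<and> J \<noteq> {0} \<and> is_submod R J \<and> fin_gen R J}"

definition t_reduction :: "'a::field set \<Rightarrow> 'a set \<Rightarrow> 'a set \<Rightarrow> bool" where
  "t_reduction R J I \<longleftrightarrow> is_ideal R J \<and> J \<subseteq> I \<and>
     (\<exists>n. t_op R (iprod R J (ipow R I n)) = t_op R (ipow R I (Suc n)))"

definition t_basic :: "'a::field set \<Rightarrow> 'a set \<Rightarrow> bool" where
  "t_basic R I \<longleftrightarrow> (\<forall>J. t_reduction R J I \<longrightarrow> t_op R J = t_op R I)"

definition finite_t_basic :: "'a::field set \<Rightarrow> bool" where
  "finite_t_basic R \<longleftrightarrow>
     (\<forall>I. is_ideal R I \<and> I \<noteq> {0} \<and> fin_gen R I \<longrightarrow> t_basic R I)"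

section \<open>The example: K = k(X)((Y)), M = Y k(X)[[Y]], R = k + M\<close>

definition kc :: "'k::field \<Rightarrow> 'k poly fract fls" where
  "kc c = fls_const (Fract [:c:] 1)"

definition Xe :: "'k::field poly fract fls" where
  "Xe = fls_const (Fract [:0, 1:] 1)"

definition Ye :: "'k::field poly fract fls" where
  "Ye = fls_X"

definition M_ex :: "'k::field poly fract fls set" where
  "M_ex = {Ye * fps_to_fls f | f. True}"

definition R_ex :: "'k::field poly fract fls set" where
  "R_ex = {kc c + m | c m. m \<in> M_ex}"

end

theory Submission
  imports Defs
begin

text \<open>Write K = k(X) and L_n for the polynomials of degree at most n in K. For a k-subspace L of K,
  Y^d (L + M) consists of the Laurent series of order at least d whose coefficient of Y^d lies in L;
  thus R = Y^0 (L_0 + M). The module Y^d (L_n + M) is generated over R by the X^i Y^d with i \<le> n,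
  and these modules multiply by adding the indices n and d. For n \<ge> 1 no nonzero scalar multiplies
  L_n into k, so the inverse of Y^d (L_n + M) is Y^(1-d) K[[Y]] and its t-closure is Y^d K[[Y]], whereas
  Y^d (L_0 + M) is divisorial. For I = Y (L_1 + M) and J = Y R this gives (JI)_t = Y^2 K[[Y]] = (I^2)_t
  but J_t = Y R \<noteq> M = I_t.
  An element of K((Y)) integral over R has nonnegative order, since otherwise its leading power
  dominates the equation; its constant term is then a rational function integral over k, hence
  a constant.\<close>

notation fls_nth (infixl "$$" 75)

section \<open>Submodules and the v- and t-operations\<close>

lemma submod_sum:
  assumes "is_submod R N" "finite F" "\<And>s. s \<in> F \<Longrightarrow> f s \<in> N"
  shows "sum f F \<in> N"
  using assms(2,3)
proof (induction F rule: finite_induct)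
  case empty then show ?case using assms(1) by (simp add: is_submod_def)
next
  case (insert x F) then show ?case using assms(1) by (simp add: is_submod_def)
qed

lemma gen_minimal:
  assumes "is_submod R N" "S \<subseteq> N"
  shows "gen R S \<subseteq> N"
proof
  fix x assume "x \<in> gen R S"
  then obtain F c where F: "finite F" "F \<subseteq> S" "\<forall>s\<in>F. c s \<in> R" and x: "x = (\<Sum>s\<in>F. c s * s)"
    unfolding gen_def by blast
  have "c s * s \<in> N" if "s \<in> F" for s
    using F that assms unfolding is_submod_def by blast
  then show "x \<in> N" unfolding x by (rule submod_sum[OF assms(1) F(1)])
qed

lemma gen_superset: "1 \<in> R \<Longrightarrow> S \<subseteq> gen R S"
proof
  fix s assume "1 \<in> R" "s \<in> S"
  then show "s \<in> gen R S"
    unfolding gen_def by (intro CollectI exI[of _ "{s}"] exI[of _ "\<lambda>_. 1"]) auto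
qed

lemma submod_gen:
  assumes "is_subring R"
  shows "is_submod R (gen R S)"
  unfolding is_submod_def
proof (intro conjI ballI)
  show "0 \<in> gen R S" unfolding gen_def by (auto intro!: exI[of _ "{}"])
next
  fix x y assume "x \<in> gen R S" "y \<in> gen R S"
  then obtain F c G d where F: "finite F" "F \<subseteq> S" "\<forall>s\<in>F. c s \<in> R" "x = (\<Sum>s\<in>F. c s * s)"
    and G: "finite G" "G \<subseteq> S" "\<forall>s\<in>G. d s \<in> R" "y = (\<Sum>s\<in>G. d s * s)"
    unfolding gen_def by blast
  define c' where "c' s = (if s \<in> F then c s else 0)" for s
  define d' where "d' s = (if s \<in> G then d s else 0)" for s
  have "0 \<in> R" using assms unfolding is_subring_def by (metis diff_self)
  then have R: "\<forall>s\<in>F \<union> G. c' s + d' s \<in> R"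
    using F(3) G(3) assms unfolding c'_def d'_def is_subring_def by auto
  have "x = (\<Sum>s\<in>F \<union> G. c' s * s)"
    unfolding F(4) by (rule sum.mono_neutral_cong_right[symmetric]) (use F G in \<open>auto simp: c'_def\<close>)
  moreover have "y = (\<Sum>s\<in>F \<union> G. d' s * s)"
    unfolding G(4) by (rule sum.mono_neutral_cong_right[symmetric]) (use F G in \<open>auto simp: d'_def\<close>)
  ultimately have "x + y = (\<Sum>s\<in>F \<union> G. (c' s + d' s) * s)"
    by (simp add: sum.distrib distrib_right)
  then show "x + y \<in> gen R S"
    unfolding gen_def using F G R by (intro CollectI exI[of _ "F \<union> G"] exI[of _ "\<lambda>s. c' s + d' s"]) auto
next
  fix r x assume r: "r \<in> R" and "x \<in> gen R S"
  then obtain F c where F: "finite F" "F \<subseteq> S" "\<forall>s\<in>F. c s \<in> R" "x = (\<Sum>s\<in>F. c s * s)"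
    unfolding gen_def by blast
  have "r * x = (\<Sum>s\<in>F. (r * c s) * s)" using F(4) by (simp add: sum_distrib_left mult.assoc)
  moreover have "\<forall>s\<in>F. r * c s \<in> R" using F(3) r assms unfolding is_subring_def by blast
  ultimately show "r * x \<in> gen R S"
    unfolding gen_def using F(1,2) by (intro CollectI exI[of _ F] exI[of _ "\<lambda>s. r * c s"]) auto
qed

lemma fin_gen_finite_gen: "finite S \<Longrightarrow> fin_gen R (gen R S)"
  unfolding fin_gen_def by blast

lemma colon_inv_antimono: "A \<subseteq> B \<Longrightarrow> colon_inv R B \<subseteq> colon_inv R A"
  unfolding colon_inv_def by blast

lemma v_op_mono: "A \<subseteq> B \<Longrightarrow> v_op R A \<subseteq> v_op R B"
  unfolding v_op_def by (intro colon_inv_antimono)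

lemma t_op_fin_gen:
  assumes "is_submod R A" "fin_gen R A" "A \<noteq> {0}"
  shows "t_op R A = v_op R A"
  unfolding t_op_def
proof
  show "\<Union> {v_op R J | J. J \<subseteq> A \<and> J \<noteq> {0} \<and> is_submod R J \<and> fin_gen R J} \<subseteq> v_op R A"
    using v_op_mono by blast
  show "v_op R A \<subseteq> \<Union> {v_op R J | J. J \<subseteq> A \<and> J \<noteq> {0} \<and> is_submod R J \<and> fin_gen R J}"
    using assms by blast
qed

section \<open>Laurent series of bounded order\<close>

definition ord_ge :: "int \<Rightarrow> 'a::field fls set" where
  "ord_ge e = {x. \<forall>n<e. x $$ n = 0}"

text \<open>For a k-subspace L of k(X), lead_in L d is the module Y^d (L + M) of the paper.\<close>

definition lead_in :: "'a::field set \<Rightarrow> int \<Rightarrow> 'a fls set" where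
  "lead_in L d = {x \<in> ord_ge d. x $$ d \<in> L}"

lemma ord_ge_mult:
  assumes "x \<in> ord_ge a" "y \<in> ord_ge b"
  shows "x * y \<in> ord_ge (a + b)" and "(x * y) $$ (a + b) = x $$ a * y $$ b"
proof -
  have "x * y \<in> ord_ge (a + b) \<and> (x * y) $$ (a + b) = x $$ a * y $$ b"
  proof (cases "x = 0 \<or> y = 0")
    case True then show ?thesis by (auto simp: ord_ge_def)
  next
    case False
    have sa: "a \<le> fls_subdegree x" using assms(1) False by (intro fls_subdegree_geI) (auto simp: ord_ge_def)
    have sb: "b \<le> fls_subdegree y" using assms(2) False by (intro fls_subdegree_geI) (auto simp: ord_ge_def)
    have "(x * y) $$ (a + b) = x $$ a * y $$ b"
    proof (cases "a = fls_subdegree x \<and> b = fls_subdegree y")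
      case True then show ?thesis by (simp add: fls_times_nth(4))
    next
      case False
      then have "a + b < fls_subdegree x + fls_subdegree y" using sa sb by auto
      moreover have "x $$ a * y $$ b = 0" using False sa sb by (cases "a < fls_subdegree x") auto
      ultimately show ?thesis by (simp add: fls_times_nth_eq0)
    qed
    moreover have "x * y \<in> ord_ge (a + b)"
      unfolding ord_ge_def using sa sb by (auto intro: fls_times_nth_eq0)
    ultimately show ?thesis by blast
  qed
  then show "x * y \<in> ord_ge (a + b)" "(x * y) $$ (a + b) = x $$ a * y $$ b" by blast+
qed

lemma ord_ge_antimono: "a \<le> b \<Longrightarrow> ord_ge b \<subseteq> ord_ge a"
  unfolding ord_ge_def by auto

lemma ord_ge_sum: "finite A \<Longrightarrow> (\<And>i. i \<in> A \<Longrightarrow> f i \<in> ord_ge a) \<Longrightarrow> sum f A \<in> ord_ge a"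
  unfolding ord_ge_def by (auto simp: fls_nth_sum)

lemma ord_ge_power:
  assumes "x \<in> ord_ge s"
  shows "x ^ i \<in> ord_ge (int i * s)" and "(x ^ i) $$ (int i * s) = (x $$ s) ^ i"
proof -
  have "x ^ i \<in> ord_ge (int i * s) \<and> (x ^ i) $$ (int i * s) = (x $$ s) ^ i"
  proof (induction i)
    case 0 then show ?case by (auto simp: ord_ge_def)
  next
    case (Suc i)
    have "x * x ^ i \<in> ord_ge (s + int i * s) \<and> (x * x ^ i) $$ (s + int i * s) = x $$ s * (x ^ i) $$ (int i * s)"
      using ord_ge_mult[OF assms] Suc by blast
    moreover have "s + int i * s = int (Suc i) * s" by (simp add: algebra_simps)
    ultimately show ?case using Suc by simp
  qed
  then show "x ^ i \<in> ord_ge (int i * s)" "(x ^ i) $$ (int i * s) = (x $$ s) ^ i" by blast+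
qed

text \<open>If x had order s < 0, the term x^n would have order n s, strictly below the orders of all
  other terms of the equation.\<close>

lemma integral_over_ord_ge_0_imp_ord_ge_0:
  fixes x :: "'a::field fls"
  assumes c: "\<And>i. i < n \<Longrightarrow> c i \<in> ord_ge 0" and eq: "x ^ n + (\<Sum>i<n. c i * x ^ i) = 0"
  shows "x \<in> ord_ge 0"
proof (rule ccontr)
  assume "x \<notin> ord_ge 0"
  define s where "s = fls_subdegree x"
  have "x \<noteq> 0" using \<open>x \<notin> ord_ge 0\<close> unfolding ord_ge_def by auto
  have s0: "s < 0" using \<open>x \<notin> ord_ge 0\<close> unfolding ord_ge_def s_def by (auto intro: fls_eq0_below_subdegree)
  have xs: "x \<in> ord_ge s" unfolding ord_ge_def s_def by auto
  have "c i * x ^ i \<in> ord_ge (int n * s + 1)" if i: "i < n" for i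
  proof -
    have "c i * x ^ i \<in> ord_ge (0 + int i * s)"
      using ord_ge_mult(1)[OF c[OF i] ord_ge_power(1)[OF xs]] .
    moreover have "(int n - 1) * s \<le> int i * s" using i s0 by (intro mult_right_mono_neg) auto
    then have "int n * s + 1 \<le> 0 + int i * s" using s0 by (simp add: algebra_simps)
    ultimately show ?thesis using ord_ge_antimono by blast
  qed
  then have "(\<Sum>i<n. c i * x ^ i) \<in> ord_ge (int n * s + 1)" by (intro ord_ge_sum) auto
  then have "(\<Sum>i<n. c i * x ^ i) $$ (int n * s) = 0" unfolding ord_ge_def by auto
  moreover have "(x ^ n) $$ (int n * s) = (x $$ s) ^ n" by (rule ord_ge_power(2)[OF xs])
  moreover have "(x ^ n + (\<Sum>i<n. c i * x ^ i)) $$ (int n * s) = 0" using eq by simp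
  ultimately have "(x $$ s) ^ n = 0" by simp
  then show False using \<open>x \<noteq> 0\<close> unfolding s_def by simp
qed

lemma lead_in_UNIV: "lead_in UNIV d = ord_ge d"
  unfolding lead_in_def by simp

lemma lead_in_mono: "L \<subseteq> L' \<Longrightarrow> lead_in L d \<subseteq> lead_in L' d"
  unfolding lead_in_def by auto

lemma lead_in_ord_ge: "lead_in L d \<subseteq> ord_ge d"
  unfolding lead_in_def by auto

text \<open>The simplifier rewrites fls_X_intpow d to fls_shift (- d) 1, so coefficients of multiples
  of powers of Y occur in this form.\<close>

lemma times_shift_one_nth [simp]: "((x :: 'a::field fls) * fls_shift m 1) $$ n = x $$ (n + m)"
  using fls_X_intpow_times_conv_shift(2)[of x "-m"] by simp

lemma times_X_intpow_lead_in_iff: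
  "x * fls_X_intpow e \<in> lead_in L (d + e) \<longleftrightarrow> x \<in> lead_in L d"
proof -
  have "(\<forall>n<d + e. x $$ (n - e) = 0) \<longleftrightarrow> (\<forall>n<d. x $$ n = 0)"
    by (metis add_diff_cancel_right' diff_less_eq)
  then show ?thesis unfolding lead_in_def ord_ge_def by simp
qed

lemma const_times_X_intpow_lead_in: "a \<in> L \<Longrightarrow> fls_const a * fls_X_intpow d \<in> lead_in L d"
  unfolding lead_in_def ord_ge_def by simp

lemma X_intpow_lead_in: "1 \<in> L \<Longrightarrow> fls_X_intpow d \<in> lead_in L d"
  unfolding lead_in_def ord_ge_def by simp

lemma X_intpow_cancel: "(x :: 'a::field fls) * fls_X_intpow (- d) * fls_X_intpow d = x"
  by (simp only: mult.assoc fls_X_intpow_times_fls_X_intpow) simp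

section \<open>Polynomials of bounded degree in k(X)\<close>

text \<open>polys_le n is L_n = k + k X + ... + k X^n inside k(X); polys_le 0 is the field k.\<close>

definition polys_le :: "nat \<Rightarrow> 'k::field poly fract set" where
  "polys_le n = {to_fract p | p. degree p \<le> n}"

lemma polys_leI: "degree p \<le> n \<Longrightarrow> to_fract p \<in> polys_le n"
  unfolding polys_le_def by blast

lemma polys_leE:
  assumes "a \<in> polys_le n"
  obtains p where "a = to_fract p" "degree p \<le> n"
  using assms unfolding polys_le_def by blast

lemma polys_le_0_iff: "a \<in> polys_le 0 \<longleftrightarrow> (\<exists>c. a = to_fract [:c:])"
proof
  assume "a \<in> polys_le 0"
  then obtain p where "a = to_fract p" "degree p = 0" by (auto elim: polys_leE)
  then show "\<exists>c. a = to_fract [:c:]" by (metis degree_eq_zeroE)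
qed (auto intro: polys_leI)

lemma zero_polys_le: "0 \<in> polys_le n"
  using polys_leI[of 0] by simp

lemma one_polys_le: "1 \<in> polys_le n"
  using polys_leI[of 1] by simp

lemma polys_le_add: "a \<in> polys_le n \<Longrightarrow> b \<in> polys_le n \<Longrightarrow> a + b \<in> polys_le n"
  by (elim polys_leE) (simp add: degree_add_le polys_leI flip: to_fract_add)

lemma polys_le_diff: "a \<in> polys_le n \<Longrightarrow> b \<in> polys_le n \<Longrightarrow> a - b \<in> polys_le n"
  by (elim polys_leE) (simp add: degree_diff_le polys_leI flip: to_fract_diff)

lemma polys_le_mult: "a \<in> polys_le m \<Longrightarrow> b \<in> polys_le n \<Longrightarrow> a * b \<in> polys_le (m + n)"
proof (elim polys_leE)
  fix p q assume "a = to_fract p" "degree p \<le> m" "b = to_fract q" "degree q \<le> n"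
  then show "a * b \<in> polys_le (m + n)"
    using degree_mult_le[of p q] by (simp add: polys_leI flip: to_fract_mult)
qed

lemma polys_le_const_mult: "c \<in> polys_le 0 \<Longrightarrow> a \<in> polys_le n \<Longrightarrow> c * a \<in> polys_le n"
  using polys_le_mult[of c 0 a n] by simp

lemma polys_le_mono: "m \<le> n \<Longrightarrow> polys_le m \<subseteq> polys_le n"
  unfolding polys_le_def by auto

lemma to_fract_power: "to_fract (p ^ n) = to_fract p ^ n"
  by (induction n) simp_all

lemma to_fract_monom: "to_fract (monom c k) = to_fract [:c:] * to_fract [:0, 1:] ^ k"
proof -
  have "monom c k = [:c:] * [:0, 1:] ^ k" by (simp add: monom_altdef)
  then show ?thesis by (simp only: to_fract_mult to_fract_power)
qed

lemma X_power_polys_le: "to_fract [:0, 1:] ^ i \<in> polys_le i"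
  using polys_leI[of "[:0, 1:] ^ i" i] by (simp add: degree_linear_power flip: to_fract_power)

lemma degree_diff_monom_coeff_le:
  assumes "degree p \<le> Suc n"
  shows "degree (p - monom (coeff p (Suc n)) (Suc n)) \<le> n"
proof (rule degree_le, intro allI impI)
  fix i assume "n < i"
  then show "coeff (p - monom (coeff p (Suc n)) (Suc n)) i = 0"
    using assms by (cases "i = Suc n") (auto simp: coeff_monom intro: coeff_eq_0)
qed

lemma linear_poly_eq:
  fixes p :: "'a::comm_semiring_1 poly"
  shows "degree p \<le> 1 \<Longrightarrow> p = [:coeff p 0:] + [:coeff p 1:] * [:0, 1:]"
  by (rule poly_eqI) (simp add: coeff_pCons coeff_eq_0 split: nat.split)

lemma polys_le_mult_not_const:
  assumes "0 < n" "a \<noteq> 0"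
  shows "\<exists>z\<in>polys_le n. a * z \<notin> polys_le 0"
proof (cases "a \<in> polys_le 0")
  case True
  then obtain c where c: "a = to_fract [:c:]" by (auto simp: polys_le_0_iff)
  have "a * to_fract [:0, 1:] \<notin> polys_le 0"
    using assms(2) by (auto simp: c polys_le_0_iff simp flip: to_fract_mult)
  moreover have "to_fract [:0, 1:] \<in> polys_le n" using assms(1) by (intro polys_leI) auto
  ultimately show ?thesis by blast
next
  case False
  then show ?thesis using one_polys_le by force
qed

lemma bezout_dvd_power_imp_dvd_one:
  fixes p q u v :: "'a::comm_semiring_1"
  assumes bezout: "u * p + v * q = 1" and "q dvd p ^ n"
  shows "q dvd 1"
  using assms(2)
proof (induction n)
  case (Suc n)
  have "p ^ n = p ^ n * (u * p + v * q)" using bezout by simp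
  also have "\<dots> = u * p ^ Suc n + q * (v * p ^ n)" by (simp add: algebra_simps)
  finally have "q dvd p ^ n" using Suc.prems by (metis dvd_add dvd_mult dvd_triv_left)
  then show ?case by (rule Suc.IH)
qed simp

text \<open>A generator of least degree of the ideal spanned by p and q is their gcd.\<close>

lemma poly_gcd_bezout:
  fixes p q :: "'k::field poly"
  assumes "q \<noteq> 0"
  obtains g p' q' u v where "p = g * p'" "q = g * q'" "u * p' + v * q' = 1"
proof -
  define E where "E = {h. h \<noteq> 0 \<and> (\<exists>u v. h = u * p + v * q)}"
  have "q \<in> E" unfolding E_def using assms by (auto intro: exI[of _ 0] exI[of _ 1])
  then obtain g where gE: "g \<in> E" and gmin: "\<And>h. h \<in> E \<Longrightarrow> degree g \<le> degree h"
    using ex_has_least_nat[of "\<lambda>h. h \<in> E" q degree] by blast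
  obtain u v where g: "g \<noteq> 0" "g = u * p + v * q" using gE unfolding E_def by blast
  have dvd: "g dvd a * p + b * q" for a b
  proof (rule ccontr)
    assume "\<not> g dvd a * p + b * q"
    then have r: "(a * p + b * q) mod g \<noteq> 0" by (simp add: dvd_eq_mod_eq_0)
    have "(a * p + b * q) mod g = (a * p + b * q) - ((a * p + b * q) div g) * g"
      by (simp add: minus_div_mult_eq_mod)
    also have "\<dots> = (a - (a * p + b * q) div g * u) * p + (b - (a * p + b * q) div g * v) * q"
      using g(2) by (simp add: algebra_simps)
    finally have "(a * p + b * q) mod g \<in> E" unfolding E_def using r by blast
    then have "degree g \<le> degree ((a * p + b * q) mod g)" by (rule gmin)
    with degree_mod_less'[OF g(1) r] show False by simp
  qed
  obtain p' where p': "p = g * p'" using dvd[of 1 0] by auto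
  obtain q' where q': "q = g * q'" using dvd[of 0 1] by auto
  have "g * (u * p' + v * q') = g * 1" using g(2) p' q' by (simp add: algebra_simps)
  then have "u * p' + v * q' = 1" using g(1) by simp
  with p' q' show thesis by (rule that)
qed

lemma integral_over_polys_imp_poly:
  fixes a :: "'k::field poly fract"
  assumes eq: "a ^ n + (\<Sum>i<n. to_fract (c i) * a ^ i) = 0"
  obtains p where "a = to_fract p"
proof -
  obtain p0 q0 where a0: "a = Fract p0 q0" and q00: "q0 \<noteq> 0" by (cases a) auto
  obtain g p q u v where gpq: "p0 = g * p" "q0 = g * q" and bezout: "u * p + v * q = 1"
    using poly_gcd_bezout[OF q00, of p0] by blast
  have "g \<noteq> 0" "q \<noteq> 0" using q00 gpq by auto
  then have aq: "a * to_fract q = to_fract p"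
    using a0 gpq by (simp add: mult_fract_cancel Fract_conv_to_fract)
  have pw: "a ^ i * to_fract q ^ n = to_fract p ^ i * to_fract q ^ (n - i)" if "i \<le> n" for i
  proof -
    have "to_fract q ^ n = to_fract q ^ i * to_fract q ^ (n - i)"
      using that by (simp flip: power_add)
    then show ?thesis using aq by (simp add: power_mult_distrib[symmetric] mult.assoc)
  qed
  define P where "P = p ^ n + (\<Sum>i<n. c i * p ^ i * q ^ (n - i))"
  have "to_fract P = (a ^ n + (\<Sum>i<n. to_fract (c i) * a ^ i)) * to_fract q ^ n"
    unfolding P_def distrib_right sum_distrib_right by (simp add: to_fract_power pw mult.assoc)
  then have "P = 0" using eq by simp
  moreover have "q dvd (\<Sum>i<n. c i * p ^ i * q ^ (n - i))"
    by (intro dvd_sum dvd_mult dvd_power) auto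
  ultimately have "q dvd p ^ n" unfolding P_def by (metis add_eq_0_iff dvd_minus_iff)
  then have "q dvd 1" by (rule bezout_dvd_power_imp_dvd_one[OF bezout])
  then obtain w where w: "1 = q * w" by (elim dvdE)
  have "a = a * (to_fract q * to_fract w)" using w by (metis mult_1_right to_fract_1 to_fract_mult)
  also have "\<dots> = to_fract (p * w)" using aq by (simp add: mult.assoc[symmetric])
  finally show thesis by (rule that)
qed

lemma integral_over_consts_imp_const:
  fixes a :: "'k::field poly fract"
  assumes c: "\<And>i. i < n \<Longrightarrow> c i \<in> polys_le 0"
    and eq: "a ^ n + (\<Sum>i<n. c i * a ^ i) = 0"
  shows "a \<in> polys_le 0"
proof -
  obtain d where d: "\<And>i. i < n \<Longrightarrow> c i = to_fract [:d i:]"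
    using c unfolding polys_le_0_iff by metis
  have eq': "a ^ n + (\<Sum>i<n. to_fract [:d i:] * a ^ i) = 0"
    using eq d by (metis (no_types, lifting) lessThan_iff sum.cong)
  obtain p where ap: "a = to_fract p" using integral_over_polys_imp_poly[OF eq'] .
  have n0: "n \<noteq> 0" using eq by (cases n) auto
  have smult: "to_fract (smult e x) = to_fract [:e:] * to_fract x" for e and x :: "'k poly"
    by (subst to_fract_mult[symmetric]) simp
  have "to_fract (p ^ n + (\<Sum>i<n. smult (d i) (p ^ i))) = 0"
    using eq' unfolding ap by (simp add: to_fract_power smult)
  then have "p ^ n + (\<Sum>i<n. smult (d i) (p ^ i)) = 0"
    by (simp only: to_fract_eq_0_iff)
  then have Pp: "p ^ n = - (\<Sum>i<n. smult (d i) (p ^ i))"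
    by (simp add: eq_neg_iff_add_eq_0)
  have "degree p = 0"
  proof (rule ccontr)
    assume dp: "degree p \<noteq> 0"
    have "degree (\<Sum>i<n. smult (d i) (p ^ i)) \<le> (n - 1) * degree p"
    proof (rule degree_sum_le)
      fix i assume i: "i \<in> {..<n}"
      have "degree (smult (d i) (p ^ i)) \<le> i * degree p"
        using degree_smult_le[of "d i" "p ^ i"] degree_power_le[of p i] by (simp add: mult.commute)
      also have "\<dots> \<le> (n - 1) * degree p" using i by (intro mult_right_mono) auto
      finally show "degree (smult (d i) (p ^ i)) \<le> (n - 1) * degree p" .
    qed simp
    moreover have "degree (p ^ n) = n * degree p" using dp by (intro degree_power_eq) auto
    ultimately have "n * degree p \<le> (n - 1) * degree p" using Pp by simp
    then show False using dp n0 by simp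
  qed
  then show ?thesis unfolding ap by (intro polys_leI) simp
qed

section \<open>The ring R = k + M\<close>

lemma kc_eq: "kc c = fls_const (to_fract [:c:])"
  by (simp add: kc_def to_fract_def)

lemma Xe_eq: "Xe = fls_const (to_fract [:0, 1:])"
  by (simp add: Xe_def to_fract_def)

lemma Xe_power_eq: "Xe ^ i = fls_const (to_fract [:0, 1:] ^ i)"
  by (simp add: Xe_eq fls_const_power)

lemma Ye_eq: "Ye = fls_X_intpow 1"
  by (simp add: Ye_def fls_X_conv_shift_1)

lemma M_ex_eq: "(M_ex :: 'k::field poly fract fls set) = ord_ge 1"
proof
  show "M_ex \<subseteq> (ord_ge 1 :: 'k poly fract fls set)"
    unfolding M_ex_def ord_ge_def Ye_def by (auto simp: fls_X_times_conv_shift)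
  show "ord_ge 1 \<subseteq> (M_ex :: 'k poly fract fls set)"
  proof
    fix x :: "'k poly fract fls" assume "x \<in> ord_ge 1"
    then have "x = fls_X * fps_to_fls (fls_regpart (fls_shift 1 x))"
      unfolding ord_ge_def by (intro fls_eqI) (auto simp: fls_X_times_conv_shift)
    then show "x \<in> M_ex" unfolding M_ex_def Ye_def by blast
  qed
qed

lemma R_ex_eq: "(R_ex :: 'k::field poly fract fls set) = lead_in (polys_le 0) 0"
proof
  show "R_ex \<subseteq> (lead_in (polys_le 0) 0 :: 'k poly fract fls set)"
    unfolding R_ex_def M_ex_eq lead_in_def ord_ge_def kc_eq by (auto simp: polys_le_0_iff)
  show "lead_in (polys_le 0) 0 \<subseteq> (R_ex :: 'k poly fract fls set)"
  proof
    fix x :: "'k poly fract fls" assume x: "x \<in> lead_in (polys_le 0) 0"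
    then obtain c where c: "x $$ 0 = to_fract [:c:]" unfolding lead_in_def polys_le_0_iff by blast
    have "x - kc c \<in> ord_ge 1" using x c unfolding lead_in_def ord_ge_def kc_eq by auto
    moreover have "x = kc c + (x - kc c)" by simp
    ultimately show "x \<in> R_ex" unfolding R_ex_def M_ex_eq by blast
  qed
qed

lemma ord_ge_subset_R_ex: "1 \<le> e \<Longrightarrow> ord_ge e \<subseteq> (R_ex :: 'k::field poly fract fls set)"
  unfolding R_ex_eq lead_in_def ord_ge_def using zero_polys_le by auto

lemma const_in_R_ex: "c \<in> polys_le 0 \<Longrightarrow> fls_const c \<in> R_ex"
  unfolding R_ex_eq lead_in_def ord_ge_def by simp

lemma subring_R_ex: "is_subring (R_ex :: 'k::field poly fract fls set)"
  unfolding is_subring_def R_ex_eq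
proof (intro conjI ballI)
  show "1 \<in> lead_in (polys_le 0) 0" unfolding lead_in_def ord_ge_def using one_polys_le by auto
  fix x y :: "'k poly fract fls"
  assume x: "x \<in> lead_in (polys_le 0) 0" and y: "y \<in> lead_in (polys_le 0) 0"
  then show "x + y \<in> lead_in (polys_le 0) 0" "x - y \<in> lead_in (polys_le 0) 0"
    unfolding lead_in_def ord_ge_def by (auto intro: polys_le_add polys_le_diff)
  have "x \<in> ord_ge 0" "y \<in> ord_ge 0" "x $$ 0 \<in> polys_le 0" "y $$ 0 \<in> polys_le 0"
    using x y unfolding lead_in_def by auto
  then show "x * y \<in> lead_in (polys_le 0) 0"
    using ord_ge_mult[of x 0 y 0] polys_le_mult[of "x $$ 0" 0 "y $$ 0" 0]
    unfolding lead_in_def by simp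
qed

lemma one_in_R_ex: "1 \<in> (R_ex :: 'k::field poly fract fls set)"
  using subring_R_ex unfolding is_subring_def by blast

lemma quotient_field_R_ex: "is_quotient_field (R_ex :: 'k::field poly fract fls set)"
  unfolding is_quotient_field_def
proof
  fix x :: "'k poly fract fls"
  define t where "t = 1 + \<bar>fls_subdegree x\<bar>"
  have "x * fls_X_intpow t \<in> ord_ge 1"
    unfolding ord_ge_def t_def by (auto intro: fls_eq0_below_subdegree)
  then have "x * fls_X_intpow t \<in> R_ex" using ord_ge_subset_R_ex by blast
  moreover have "fls_X_intpow t \<in> (R_ex :: 'k poly fract fls set)"
    using ord_ge_subset_R_ex[of t] unfolding t_def ord_ge_def by auto
  moreover have "(fls_X_intpow t :: 'k poly fract fls) \<noteq> 0" by (simp add: fls_shift_eq0_iff)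
  moreover have "x = x * fls_X_intpow t / fls_X_intpow t" by simp
  ultimately show "\<exists>a\<in>R_ex. \<exists>b\<in>R_ex. b \<noteq> 0 \<and> x = a / b" by blast
qed

lemma integrally_closed_R_ex: "integrally_closed (R_ex :: 'k::field poly fract fls set)"
  unfolding integrally_closed_def
proof (intro allI impI)
  fix x :: "'k poly fract fls"
  assume "\<exists>n c. (\<forall>i<n. c i \<in> R_ex) \<and> x ^ n + (\<Sum>i<n. c i * x ^ i) = 0"
  then obtain n c where c: "\<And>i. i < n \<Longrightarrow> c i \<in> lead_in (polys_le 0) 0"
    and eq: "x ^ n + (\<Sum>i<n. c i * x ^ i) = 0"
    unfolding R_ex_eq by blast
  have x0: "x \<in> ord_ge 0"
    using c lead_in_ord_ge by (intro integral_over_ord_ge_0_imp_ord_ge_0[OF _ eq]) blast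
  have "(c i * x ^ i) $$ 0 = c i $$ 0 * (x $$ 0) ^ i" if "i < n" for i
    using ord_ge_mult(2)[of "c i" 0 "x ^ i" 0] ord_ge_power[OF x0, of i] c[OF that] lead_in_ord_ge
    by auto
  then have "(x $$ 0) ^ n + (\<Sum>i<n. c i $$ 0 * (x $$ 0) ^ i) = 0"
    using arg_cong[OF eq, of "\<lambda>y. y $$ 0"] ord_ge_power(2)[OF x0, of n] by (simp add: fls_nth_sum)
  moreover have "c i $$ 0 \<in> polys_le 0" if "i < n" for i
    using c[OF that] unfolding lead_in_def by simp
  ultimately have "x $$ 0 \<in> polys_le 0" by (rule integral_over_consts_imp_const[rotated])
  then show "x \<in> R_ex" using x0 unfolding R_ex_eq lead_in_def by simp
qed

lemma submod_lead_in:
  fixes L :: "'k::field poly fract set"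
  assumes "0 \<in> L" "\<And>a b. a \<in> L \<Longrightarrow> b \<in> L \<Longrightarrow> a + b \<in> L"
    and "\<And>c a. c \<in> polys_le 0 \<Longrightarrow> a \<in> L \<Longrightarrow> c * a \<in> L"
  shows "is_submod R_ex (lead_in L d)"
  unfolding is_submod_def
proof (intro conjI ballI)
  show "0 \<in> lead_in L d" unfolding lead_in_def ord_ge_def using assms(1) by auto
  fix x y :: "'k poly fract fls" assume "x \<in> lead_in L d" "y \<in> lead_in L d"
  then show "x + y \<in> lead_in L d" using assms(2) unfolding lead_in_def ord_ge_def by auto
next
  fix r x :: "'k poly fract fls" assume r: "r \<in> R_ex" and x: "x \<in> lead_in L d"
  then have "r \<in> ord_ge 0" "x \<in> ord_ge d" "r $$ 0 \<in> polys_le 0" "x $$ d \<in> L"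
    unfolding R_ex_eq lead_in_def by auto
  then show "r * x \<in> lead_in L d"
    using ord_ge_mult[of r 0 x d] assms(3) unfolding lead_in_def by simp
qed

lemma submod_lead_in_polys_le: "is_submod R_ex (lead_in (polys_le n) d)"
  by (rule submod_lead_in) (auto intro: zero_polys_le polys_le_add polys_le_const_mult)

lemma ideal_lead_in_polys_le: "1 \<le> d \<Longrightarrow> is_ideal R_ex (lead_in (polys_le n) d :: 'k::field poly fract fls set)"
  unfolding is_ideal_def using submod_lead_in_polys_le lead_in_ord_ge ord_ge_subset_R_ex by blast

section \<open>Inverses and t-closures of the modules Y^d (L + M)\<close>

text \<open>For the hard inclusion, test x against the monomial z Y^(-e), where e is the order of x and z
  is chosen by the hypothesis on L for the leading coefficient of x.\<close>

lemma colon_inv_lead_in: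
  fixes L :: "'k::field poly fract set"
  assumes "0 \<in> L" and large: "\<And>a. a \<noteq> 0 \<Longrightarrow> \<exists>z\<in>L. a * z \<notin> polys_le 0"
  shows "colon_inv R_ex (lead_in L d) = ord_ge (1 - d)"
proof
  show "ord_ge (1 - d) \<subseteq> colon_inv R_ex (lead_in L d)"
  proof
    fix x :: "'k poly fract fls" assume x: "x \<in> ord_ge (1 - d)"
    have "x * y \<in> R_ex" if "y \<in> lead_in L d" for y
      using ord_ge_mult(1)[OF x, of y d] that lead_in_ord_ge ord_ge_subset_R_ex[of 1] by auto
    then show "x \<in> colon_inv R_ex (lead_in L d)" unfolding colon_inv_def by blast
  qed
  show "colon_inv R_ex (lead_in L d) \<subseteq> ord_ge (1 - d)"
  proof
    fix x :: "'k poly fract fls" assume x: "x \<in> colon_inv R_ex (lead_in L d)"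
    show "x \<in> ord_ge (1 - d)" unfolding ord_ge_def
    proof (rule CollectI, intro allI impI, rule ccontr)
      fix n assume n: "n < 1 - d" and "x $$ n \<noteq> 0"
      define e where "e = fls_subdegree x"
      have "e \<le> n" using \<open>x $$ n \<noteq> 0\<close> unfolding e_def by (meson fls_eq0_below_subdegree not_le)
      have "x \<noteq> 0" using \<open>x $$ n \<noteq> 0\<close> by auto
      then have "x $$ e \<noteq> 0" unfolding e_def by simp
      then obtain z where z: "z \<in> L" "x $$ e * z \<notin> polys_le 0" using large by blast
      define y where "y = fls_const z * fls_X_intpow (- e)"
      have "y \<in> lead_in L d"
        unfolding y_def lead_in_def ord_ge_def using \<open>e \<le> n\<close> n z(1) assms(1) by auto
      then have "x * y \<in> R_ex" using x unfolding colon_inv_def by blast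
      moreover have "(x * y) $$ 0 = x $$ e * z"
        unfolding y_def by (simp add: mult.assoc[symmetric] mult.commute[of x])
      ultimately show False using z(2) unfolding R_ex_eq lead_in_def by simp
    qed
  qed
qed

lemma colon_inv_lead_in_const:
  "colon_inv R_ex (lead_in (polys_le 0) d) = (lead_in (polys_le 0) (- d) :: 'k::field poly fract fls set)"
proof
  show "lead_in (polys_le 0) (- d) \<subseteq> colon_inv R_ex (lead_in (polys_le 0) d :: 'k poly fract fls set)"
  proof
    fix x :: "'k poly fract fls" assume x: "x \<in> lead_in (polys_le 0) (- d)"
    have "x * y \<in> R_ex" if y: "y \<in> lead_in (polys_le 0) d" for y
    proof -
      have "x \<in> ord_ge (- d)" "y \<in> ord_ge d" "x $$ (- d) \<in> polys_le 0" "y $$ d \<in> polys_le 0"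
        using x y unfolding lead_in_def by auto
      then show ?thesis
        using ord_ge_mult[of x "- d" y d] polys_le_mult[of "x $$ (- d)" 0 "y $$ d" 0]
        unfolding R_ex_eq lead_in_def by simp
    qed
    then show "x \<in> colon_inv R_ex (lead_in (polys_le 0) d)" unfolding colon_inv_def by blast
  qed
  show "colon_inv R_ex (lead_in (polys_le 0) d) \<subseteq> (lead_in (polys_le 0) (- d) :: 'k poly fract fls set)"
  proof
    fix x :: "'k poly fract fls" assume x: "x \<in> colon_inv R_ex (lead_in (polys_le 0) d)"
    have "fls_X_intpow d \<in> (lead_in (polys_le 0) d :: 'k poly fract fls set)"
      by (rule X_intpow_lead_in[OF one_polys_le])
    then have "x * fls_X_intpow d \<in> lead_in (polys_le 0) (- d + d)"
      using x unfolding colon_inv_def R_ex_eq by simp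
    then show "x \<in> lead_in (polys_le 0) (- d)" by (simp only: times_X_intpow_lead_in_iff)
  qed
qed

lemma colon_inv_ord_ge: "colon_inv R_ex (ord_ge d) = (ord_ge (1 - d) :: 'k::field poly fract fls set)"
proof -
  have "to_fract [:0, 1:] \<notin> (polys_le 0 :: 'k poly fract set)" by (simp add: polys_le_0_iff)
  then have "\<exists>z\<in>UNIV. a * z \<notin> polys_le 0" if "a \<noteq> 0" for a :: "'k poly fract"
    using that by (intro bexI[of _ "to_fract [:0, 1:] / a"]) auto
  then show ?thesis using colon_inv_lead_in[of "UNIV :: 'k poly fract set" d] by (simp add: lead_in_UNIV)
qed

lemma v_op_lead_in_polys_le:
  "0 < n \<Longrightarrow> v_op R_ex (lead_in (polys_le n) d) = (ord_ge d :: 'k::field poly fract fls set)"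
  unfolding v_op_def
  by (subst colon_inv_lead_in) (auto intro: zero_polys_le polys_le_mult_not_const simp: colon_inv_ord_ge)

lemma v_op_lead_in_const:
  "v_op R_ex (lead_in (polys_le 0) d) = (lead_in (polys_le 0) d :: 'k::field poly fract fls set)"
  unfolding v_op_def colon_inv_lead_in_const by simp

lemma Xe_power_times_X_intpow_lead_in:
  "i \<le> n \<Longrightarrow> Xe ^ i * fls_X_intpow d \<in> (lead_in (polys_le n) d :: 'k::field poly fract fls set)"
  unfolding Xe_power_eq using const_times_X_intpow_lead_in X_power_polys_le polys_le_mono by blast

text \<open>Peel off the top coefficient of the leading term and induct on the degree bound.\<close>

lemma lead_in_polys_le_subset_submod:
  fixes G :: "'k::field poly fract fls set"
  assumes G: "is_submod R_ex G" and gens: "\<And>i. i \<le> n \<Longrightarrow> Xe ^ i * fls_X_intpow d \<in> G"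
  shows "lead_in (polys_le n) d \<subseteq> G"
  using gens
proof (induction n)
  case 0
  show ?case
  proof
    fix x :: "'k poly fract fls" assume "x \<in> lead_in (polys_le 0) d"
    then have "x * fls_X_intpow (- d) \<in> R_ex"
      using times_X_intpow_lead_in_iff[of x "- d" "polys_le 0" d] unfolding R_ex_eq by simp
    then have "x * fls_X_intpow (- d) * fls_X_intpow d \<in> G"
      using G "0.prems"[of 0] unfolding is_submod_def by simp
    then show "x \<in> G" by (simp only: X_intpow_cancel)
  qed
next
  case (Suc n)
  show ?case
  proof
    fix x :: "'k poly fract fls" assume x: "x \<in> lead_in (polys_le (Suc n)) d"
    then obtain p where p: "x $$ d = to_fract p" "degree p \<le> Suc n"
      unfolding lead_in_def by (auto elim: polys_leE)
    define c where "c = to_fract [:coeff p (Suc n):]"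
    define t where "t = fls_const c * (Xe ^ Suc n * fls_X_intpow d)"
    have t_eq: "t = fls_const (c * to_fract [:0, 1:] ^ Suc n) * fls_X_intpow d"
      unfolding t_def Xe_power_eq by (simp add: mult.assoc)
    have "x - t \<in> ord_ge d" using x unfolding t_eq lead_in_def ord_ge_def by simp
    moreover have "(x - t) $$ d = to_fract (p - monom (coeff p (Suc n)) (Suc n))"
      unfolding t_eq c_def using p(1) by (simp add: to_fract_monom)
    ultimately have "x - t \<in> lead_in (polys_le n) d"
      unfolding lead_in_def using polys_leI[OF degree_diff_monom_coeff_le[OF p(2)]] by simp
    moreover have "lead_in (polys_le n) d \<subseteq> G" using Suc.prems by (intro Suc.IH) simp
    ultimately have "x - t \<in> G" by blast
    moreover have "t \<in> G"
      using G Suc.prems[of "Suc n"] const_in_R_ex[of c] unfolding t_def c_def is_submod_def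
      by (simp add: polys_leI)
    ultimately have "(x - t) + t \<in> G" using G unfolding is_submod_def by blast
    then show "x \<in> G" by simp
  qed
qed

lemma gen_X_powers:
  "gen R_ex ((\<lambda>i. Xe ^ i * fls_X_intpow d) ` {..n})
     = (lead_in (polys_le n) d :: 'k::field poly fract fls set)"
proof
  show "gen R_ex ((\<lambda>i. Xe ^ i * fls_X_intpow d) ` {..n}) \<subseteq> (lead_in (polys_le n) d :: 'k poly fract fls set)"
    using Xe_power_times_X_intpow_lead_in by (intro gen_minimal submod_lead_in_polys_le) auto
  have "(\<lambda>i. Xe ^ i * fls_X_intpow d) ` {..n} \<subseteq> gen R_ex ((\<lambda>i. Xe ^ i * fls_X_intpow d) ` {..n} :: 'k poly fract fls set)"
    by (rule gen_superset[OF one_in_R_ex])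
  then show "lead_in (polys_le n) d \<subseteq> gen R_ex ((\<lambda>i. Xe ^ i * fls_X_intpow d) ` {..n} :: 'k poly fract fls set)"
    using lead_in_polys_le_subset_submod[OF submod_gen[OF subring_R_ex]] by blast
qed

lemma fin_gen_lead_in_polys_le: "fin_gen R_ex (lead_in (polys_le n) d :: 'k::field poly fract fls set)"
  unfolding gen_X_powers[symmetric] by (rule fin_gen_finite_gen) simp

lemma lead_in_polys_le_nonzero: "lead_in (polys_le n) d \<noteq> ({0} :: 'k::field poly fract fls set)"
  using X_intpow_lead_in[of "polys_le n :: 'k poly fract set" d, OF one_polys_le] by (auto simp: fls_shift_eq0_iff)

lemma iprod_lead_in_polys_le:
  "iprod R_ex (lead_in (polys_le a) d) (lead_in (polys_le b) e)
     = (lead_in (polys_le (a + b)) (d + e) :: 'k::field poly fract fls set)"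
  unfolding iprod_def
proof
  have "u * v \<in> lead_in (polys_le (a + b)) (d + e)"
    if "u \<in> lead_in (polys_le a) d" "v \<in> (lead_in (polys_le b) e :: 'k poly fract fls set)" for u v
    using that ord_ge_mult[of u d v e] polys_le_mult[of "u $$ d" a "v $$ e" b]
    unfolding lead_in_def by simp
  then show "gen R_ex {u * v |u v. u \<in> lead_in (polys_le a) d \<and> v \<in> lead_in (polys_le b) e}
    \<subseteq> (lead_in (polys_le (a + b)) (d + e) :: 'k poly fract fls set)"
    by (intro gen_minimal submod_lead_in_polys_le) blast
  define P where "P = {u * v |u v. u \<in> lead_in (polys_le a) d \<and> v \<in> (lead_in (polys_le b) e :: 'k poly fract fls set)}"
  have "Xe ^ i * fls_X_intpow (d + e) \<in> P" if "i \<le> a + b" for i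
  proof -
    define j where "j = min i a"
    have "Xe ^ i * fls_X_intpow (d + e) = (Xe ^ j * fls_X_intpow d) * (Xe ^ (i - j) * fls_X_intpow e)"
      unfolding j_def by (simp add: mult_ac fls_X_intpow_times_fls_X_intpow flip: power_add)
    moreover have "j \<le> a" "i - j \<le> b" using that unfolding j_def by auto
    ultimately show ?thesis unfolding P_def using Xe_power_times_X_intpow_lead_in by blast
  qed
  moreover have "P \<subseteq> gen R_ex P" by (rule gen_superset[OF one_in_R_ex])
  ultimately show "lead_in (polys_le (a + b)) (d + e) \<subseteq> gen R_ex P"
    using lead_in_polys_le_subset_submod[OF submod_gen[OF subring_R_ex]] by blast
qed

lemma ipow_lead_in_polys_le:
  "ipow R_ex (lead_in (polys_le n) d) k = (lead_in (polys_le (k * n)) (int k * d) :: 'k::field poly fract fls set)"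
proof (induction k)
  case 0 show ?case by (simp add: R_ex_eq)
next
  case (Suc k) then show ?case by (simp add: iprod_lead_in_polys_le algebra_simps)
qed

lemma t_op_lead_in_polys_le:
  "0 < n \<Longrightarrow> t_op R_ex (lead_in (polys_le n) d) = (ord_ge d :: 'k::field poly fract fls set)"
  by (simp add: t_op_fin_gen submod_lead_in_polys_le fin_gen_lead_in_polys_le
      lead_in_polys_le_nonzero v_op_lead_in_polys_le)

lemma t_op_lead_in_const:
  "t_op R_ex (lead_in (polys_le 0) d) = (lead_in (polys_le 0) d :: 'k::field poly fract fls set)"
  by (simp add: t_op_fin_gen submod_lead_in_polys_le fin_gen_lead_in_polys_le
      lead_in_polys_le_nonzero v_op_lead_in_const)

section \<open>The ideals I and J\<close>

lemma gen_Y: "gen R_ex {Ye} = (lead_in (polys_le 0) 1 :: 'k::field poly fract fls set)"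
  using gen_X_powers[of 1 0] by (simp add: Ye_eq)

lemma gen_Y_XY: "gen R_ex {Ye, Xe * Ye} = (lead_in (polys_le 1) 1 :: 'k::field poly fract fls set)"
proof -
  have "gen R_ex {Ye, Xe * Ye} = gen R_ex ((\<lambda>i. Xe ^ i * fls_X_intpow 1) ` {..1} :: 'k poly fract fls set)"
    by (simp add: Ye_eq atMost_Suc insert_commute)
  also have "\<dots> = lead_in (polys_le 1) 1" by (rule gen_X_powers)
  finally show ?thesis .
qed

lemma Ye_times_lead_in_iff: "Ye * x \<in> lead_in L (d + 1) \<longleftrightarrow> x \<in> lead_in L d"
  using times_X_intpow_lead_in_iff[of x 1 L d] by (simp add: Ye_eq mult.commute)

lemma Ye_times_lead_in: "(\<lambda>x. Ye * x) ` lead_in L d = lead_in L (d + 1)"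
proof safe
  fix x assume x: "x \<in> lead_in L (d + 1)"
  have "x = x * fls_X_intpow (- 1) * fls_X_intpow 1" by (rule X_intpow_cancel[symmetric])
  then have "x = Ye * (x * fls_X_intpow (- 1))" by (simp only: Ye_eq mult_ac)
  with x show "x \<in> (\<lambda>x. Ye * x) ` lead_in L d" by (metis Ye_times_lead_in_iff image_eqI)
qed (simp add: Ye_times_lead_in_iff)

lemma Ye_times_R_ex: "{Ye * r | r. r \<in> R_ex} = (lead_in (polys_le 0) 1 :: 'k::field poly fract fls set)"
  using Ye_times_lead_in[of "polys_le 0" 0] by (auto simp: R_ex_eq)

lemma lead_in_polys_le_1_0:
  "lead_in (polys_le 1) 0 = {kc a + kc b * Xe + m | a b m. m \<in> (M_ex :: 'k::field poly fract fls set)}"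
proof
  show "lead_in (polys_le 1) 0 \<subseteq> {kc a + kc b * Xe + m | a b m. m \<in> (M_ex :: 'k poly fract fls set)}"
  proof
    fix x :: "'k poly fract fls" assume x: "x \<in> lead_in (polys_le 1) 0"
    then obtain p where p: "x $$ 0 = to_fract p" "degree p \<le> 1"
      unfolding lead_in_def by (auto elim: polys_leE)
    define m where "m = x - kc (coeff p 0) - kc (coeff p 1) * Xe"
    have "to_fract p = to_fract ([:coeff p 0:] + [:coeff p 1:] * [:0, 1:])"
      using linear_poly_eq[OF p(2)] by (rule arg_cong)
    then have "x $$ 0 = to_fract [:coeff p 0:] + to_fract [:coeff p 1:] * to_fract [:0, 1:]"
      unfolding p(1) by (simp only: to_fract_add to_fract_mult)
    then have "m \<in> M_ex" using x unfolding m_def M_ex_eq lead_in_def ord_ge_def kc_eq Xe_eq by auto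
    moreover have "x = kc (coeff p 0) + kc (coeff p 1) * Xe + m" unfolding m_def by simp
    ultimately show "x \<in> {kc a + kc b * Xe + m | a b m. m \<in> M_ex}" by blast
  qed
  show "{kc a + kc b * Xe + m | a b m. m \<in> M_ex} \<subseteq> (lead_in (polys_le 1) 0 :: 'k poly fract fls set)"
  proof safe
    fix a b and m :: "'k poly fract fls" assume "m \<in> M_ex"
    moreover have "to_fract [:a:] + to_fract [:b:] * to_fract [:0, 1:] \<in> (polys_le 1 :: 'k poly fract set)"
      by (intro polys_le_add polys_le_const_mult polys_leI) auto
    ultimately show "kc a + kc b * Xe + m \<in> lead_in (polys_le 1) 0"
      unfolding M_ex_eq lead_in_def ord_ge_def kc_eq Xe_eq by simp
  qed
qed

lemma lead_in_polys_le_1_1: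
  "{Ye * (kc a + kc b * Xe + m) | a b m. m \<in> M_ex} = (lead_in (polys_le 1) 1 :: 'k::field poly fract fls set)"
proof -
  have "{Ye * (kc a + kc b * Xe + m) | a b m. m \<in> M_ex}
      = (\<lambda>x. Ye * x) ` {kc a + kc b * Xe + m | a b m. m \<in> (M_ex :: 'k poly fract fls set)}"
    by blast
  also have "\<dots> = lead_in (polys_le 1) (0 + 1)" unfolding lead_in_polys_le_1_0[symmetric] by (rule Ye_times_lead_in)
  finally show ?thesis by simp
qed

lemma lead_in_const_ne_ord_ge: "lead_in (polys_le 0) d \<noteq> (ord_ge d :: 'k::field poly fract fls set)"
proof
  assume eq: "lead_in (polys_le 0) d = (ord_ge d :: 'k poly fract fls set)"
  have "Xe * fls_X_intpow d \<in> (ord_ge d :: 'k poly fract fls set)"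
    using Xe_power_times_X_intpow_lead_in[of 1 1 d] lead_in_ord_ge by auto
  then have "Xe * fls_X_intpow d \<in> (lead_in (polys_le 0) d :: 'k poly fract fls set)"
    using eq by simp
  then show False unfolding lead_in_def Xe_eq by (simp add: polys_le_0_iff)
qed

lemma not_finite_t_basic_R_ex: "\<not> finite_t_basic (R_ex :: 'k::field poly fract fls set)"
proof -
  define I :: "'k poly fract fls set" where "I = lead_in (polys_le 1) 1"
  define J :: "'k poly fract fls set" where "J = lead_in (polys_le 0) 1"
  have "t_op R_ex (iprod R_ex J (ipow R_ex I 1)) = t_op R_ex (ipow R_ex I (Suc 1))"
    unfolding I_def J_def ipow_lead_in_polys_le iprod_lead_in_polys_le
    by (simp add: t_op_lead_in_polys_le)
  then have "t_reduction R_ex J I"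
    unfolding t_reduction_def I_def J_def using ideal_lead_in_polys_le lead_in_mono polys_le_mono by blast
  moreover have "t_op R_ex J \<noteq> t_op R_ex I"
    unfolding I_def J_def by (simp add: t_op_lead_in_const t_op_lead_in_polys_le lead_in_const_ne_ord_ge)
  ultimately have "\<not> t_basic R_ex I" unfolding t_basic_def by blast
  then show ?thesis unfolding finite_t_basic_def I_def
    using ideal_lead_in_polys_le lead_in_polys_le_nonzero fin_gen_lead_in_polys_le by blast
qed

theorem mainTheorem13:
  fixes R M I J :: "'k::field poly fract fls set"
  assumes "M = M_ex" and "R = R_ex"
    and "I = gen R {Ye, Xe * Ye}" and "J = gen R {Ye}"
  shows "is_subring R \<and> is_quotient_field R \<and> integrally_closed R
     \<and> \<not> finite_t_basic R
     \<and> I = {Ye * (kc a + kc b * Xe + m) | a b m. m \<in> M}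
     \<and> is_ideal R I \<and> fin_gen R I \<and> I \<noteq> {0}
     \<and> is_ideal R J \<and> J \<subseteq> I
     \<and> t_op R (iprod R J I) = t_op R (ipow R I 2)
     \<and> t_op R J = {Ye * r | r. r \<in> R} \<and> {Ye * r | r. r \<in> R} \<noteq> M
     \<and> t_op R I = M"
proof -
  have I: "I = lead_in (polys_le 1) 1" and J: "J = lead_in (polys_le 0) 1"
    using assms gen_Y_XY gen_Y by simp_all
  have JI: "lead_in (polys_le 0) 1 \<subseteq> (lead_in (polys_le 1) 1 :: 'k poly fract fls set)"
    by (intro lead_in_mono polys_le_mono) simp
  have t_red: "t_op R_ex (iprod R_ex (lead_in (polys_le 0) 1) (lead_in (polys_le 1) 1))
      = t_op R_ex (ipow R_ex (lead_in (polys_le 1) 1) 2 :: 'k poly fract fls set)"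
    by (simp add: iprod_lead_in_polys_le ipow_lead_in_polys_le t_op_lead_in_polys_le)
  have t_J: "t_op R_ex (lead_in (polys_le 0) 1) = {Ye * r | r. r \<in> (R_ex :: 'k poly fract fls set)}"
    and YR: "{Ye * r | r. r \<in> R_ex} \<noteq> M" and t_I: "t_op R_ex (lead_in (polys_le 1) 1) = M"
    unfolding assms(1) Ye_times_R_ex M_ex_eq
    by (simp_all add: t_op_lead_in_const t_op_lead_in_polys_le lead_in_const_ne_ord_ge)
  have I_form: "lead_in (polys_le 1) 1 = {Ye * (kc a + kc b * Xe + m) | a b m. m \<in> M}"
    unfolding assms(1) by (rule lead_in_polys_le_1_1[symmetric])
  show ?thesis
    unfolding assms(2) I J
    by (intro conjI subring_R_ex quotient_field_R_ex integrally_closed_R_ex not_finite_t_basic_R_ex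
        ideal_lead_in_polys_le fin_gen_lead_in_polys_le lead_in_polys_le_nonzero JI t_red t_J YR t_I I_form
        order_refl)
qed

end
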